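(* Let $L$ be a simplicial complex and $K\subseteq L$ a subcomplex such that the relative complex $(L,K)$ has dimension $d$, i.e. $d=\max\{\dim F: F\in L\setminus K\}$. Let $\kappa:V(K)\to\{0,1,\dots,m-1\}$ be a proper $m$-coloring of $K$ (it need not be proper on edges of $L\setminus K$). Then there is a complex $L'$, obtained from $L$ by a finite sequence of stellar subdivisions, such that (1) $K$ is a subcomplex of $L'$ (no face of $K$ is subdivided), and (2) $\kappa$ extends to a proper coloring $\kappa':V(L')\to\{0,1,\dots,\max\{m-1,d\}\}$ such that every vertex of $L'$ not in $K$ receives a color in $\{0,1,\dots,d\}$.
   Context: All simplicial complexes are finite abstract simplicial complexes. For a finite set $F$, $\overline{F}$ denotes the simplex of all subsets of $F$ and $\partial\overline{F}$ the complex of proper subsets; $*$ denotes join; $\mathrm{lk}_\Delta(F)=\{G\in\Delta: F\cap G=\emptyset, F\cup G\in\Delta\}$. The stellar subdivision of $\Delta$ at a nonempty face $F$ is $\mathrm{sd}_F(\Delta)=\{G\in\Delta: F\not\subseteq G\}\cup(\overline{\{a\}}*\partial\overline{F}*\mathrm{lk}_\Delta(F))$, where $a$ is a new vertex. A proper $m$-coloring of a complex is a map from its vertex set to $\{0,\dots,m-1\}$ giving distinct colors to the endpoints of every edge. *)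

theory Defs
  imports Main
begin

definition simplicial_complex :: "'a set set \<Rightarrow> bool" where
  "simplicial_complex \<Delta> \<longleftrightarrow> finite \<Delta> \<and> (\<forall>F\<in>\<Delta>. finite F) \<and> (\<forall>F\<in>\<Delta>. \<forall>G. G \<subseteq> F \<longrightarrow> G \<in> \<Delta>)"

definition vertices :: "'a set set \<Rightarrow> 'a set" where
  "vertices \<Delta> = \<Union>\<Delta>"

definition link :: "'a set set \<Rightarrow> 'a set \<Rightarrow> 'a set set" where
  "link \<Delta> F = {G \<in> \<Delta>. F \<inter> G = {} \<and> F \<union> G \<in> \<Delta>}"

text \<open>Stellar subdivision of \<Delta> at face F with new vertex a:
  {G \<in> \<Delta>. F not a subset of G} \<union> (simplex{a} * boundary(F) * lk(F)).\<close>
definition stellar_subdivision :: "'a set set \<Rightarrow> 'a set \<Rightarrow> 'a \<Rightarrow> 'a set set" where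
  "stellar_subdivision \<Delta> F a =
     {G \<in> \<Delta>. \<not> F \<subseteq> G} \<union>
     {A \<union> H \<union> G | A H G. A \<subseteq> {a} \<and> H \<subset> F \<and> G \<in> link \<Delta> F}"

definition stellar_step :: "'a set set \<Rightarrow> 'a set set \<Rightarrow> bool" where
  "stellar_step \<Delta> \<Delta>' \<longleftrightarrow>
     (\<exists>F a. F \<in> \<Delta> \<and> F \<noteq> {} \<and> a \<notin> vertices \<Delta> \<and> \<Delta>' = stellar_subdivision \<Delta> F a)"

definition proper_coloring_on :: "'a set set \<Rightarrow> ('a \<Rightarrow> nat) \<Rightarrow> bool" where
  "proper_coloring_on \<Delta> c \<longleftrightarrow> (\<forall>u v. {u, v} \<in> \<Delta> \<longrightarrow> u \<noteq> v \<longrightarrow> c u \<noteq> c v)"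

definition proper_m_coloring :: "'a set set \<Rightarrow> nat \<Rightarrow> ('a \<Rightarrow> nat) \<Rightarrow> bool" where
  "proper_m_coloring \<Delta> m c \<longleftrightarrow> (\<forall>v\<in>vertices \<Delta>. c v < m) \<and> proper_coloring_on \<Delta> c"

text \<open>Dimension of a face: card F - 1 (as an integer, so the empty face has dimension -1).\<close>
definition face_dim :: "'a set \<Rightarrow> int" where
  "face_dim F = int (card F) - 1"

end

theory Submission
  imports Defs
begin

(*
  Induction on the number of faces of L outside K. Remove a facet F of L - K, subdivide
  L - {F} by induction, and put F back as the stellar subdivision of L at F, i.e. the cone
  a * \<partial>F over a fresh vertex a. Since the steps subdividing L - {F} never use a, they lift
  to the cone, which then becomes a * X' with X' the subdivided \<partial>F, whose faces have at most
  d vertices. It remains to color the apex a without touching the colors of L0.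

  This is done in rounds. Each pending apex w has a set B w of excluded colors, and every face
  of its base has at most n vertices colored outside B w. Pick a color c w \<le> d outside B w and
  subdivide every edge {w, z} with z of color c w by a new vertex; that vertex becomes a
  pending apex over \<partial>{w, z} * lk z, with c w added to its excluded colors. Its base faces lose
  the vertex z, so n drops by one, and after d + 1 rounds no apex is pending.
*)

definition downward_closed :: "'a set set \<Rightarrow> bool" where
  "downward_closed X \<longleftrightarrow> (\<forall>F\<in>X. \<forall>G. G \<subseteq> F \<longrightarrow> G \<in> X)"

lemma simplicial_complex_altdef:
  "simplicial_complex \<Delta> \<longleftrightarrow> finite \<Delta> \<and> (\<forall>F\<in>\<Delta>. finite F) \<and> downward_closed \<Delta>"
  unfolding simplicial_complex_def downward_closed_def by blast

lemma downward_closedD: "downward_closed X \<Longrightarrow> F \<in> X \<Longrightarrow> G \<subseteq> F \<Longrightarrow> G \<in> X"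
  unfolding downward_closed_def by blast

lemma finite_vertices: "simplicial_complex \<Delta> \<Longrightarrow> finite (vertices \<Delta>)"
  unfolding simplicial_complex_def vertices_def by auto

lemma vertices_mono: "X \<subseteq> Y \<Longrightarrow> vertices X \<subseteq> vertices Y"
  unfolding vertices_def by auto

lemma link_singleton: "link Y {z} = {G \<in> Y. z \<notin> G \<and> insert z G \<in> Y}"
  unfolding link_def by auto

lemma stellar_subdivisionE:
  assumes "X \<in> stellar_subdivision \<Delta> F a"
  obtains "X \<in> \<Delta>" "\<not> F \<subseteq> X"
  | A H G where "X = A \<union> H \<union> G" "A \<subseteq> {a}" "H \<subset> F" "G \<in> link \<Delta> F"
  using assms unfolding stellar_subdivision_def by blast

lemma stellar_subdivision_keepI: "X \<in> \<Delta> \<Longrightarrow> \<not> F \<subseteq> X \<Longrightarrow> X \<in> stellar_subdivision \<Delta> F a"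
  unfolding stellar_subdivision_def by blast

lemma stellar_subdivision_joinI:
  "A \<subseteq> {a} \<Longrightarrow> H \<subset> F \<Longrightarrow> G \<in> link \<Delta> F \<Longrightarrow> A \<union> H \<union> G \<in> stellar_subdivision \<Delta> F a"
  unfolding stellar_subdivision_def by blast

lemma downward_closed_link:
  assumes "downward_closed \<Delta>"
  shows "downward_closed (link \<Delta> F)"
  unfolding downward_closed_def
proof (intro ballI allI impI)
  fix G S assume G: "G \<in> link \<Delta> F" and S: "S \<subseteq> G"
  then have G': "G \<in> \<Delta>" "F \<inter> G = {}" "F \<union> G \<in> \<Delta>" unfolding link_def by auto
  have "F \<union> S \<subseteq> F \<union> G" using S by blast
  then have "S \<in> \<Delta>" "F \<union> S \<in> \<Delta>"
    using downward_closedD[OF assms G'(1) S] downward_closedD[OF assms G'(3)] by auto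
  moreover have "F \<inter> S = {}" using G'(2) S by blast
  ultimately show "S \<in> link \<Delta> F" unfolding link_def by simp
qed

lemma stellar_subdivision_downward_closed:
  assumes "downward_closed \<Delta>"
  shows "downward_closed (stellar_subdivision \<Delta> F a)"
  unfolding downward_closed_def
proof (intro ballI allI impI)
  fix X S assume X: "X \<in> stellar_subdivision \<Delta> F a" and S: "S \<subseteq> X"
  from X show "S \<in> stellar_subdivision \<Delta> F a"
  proof (cases rule: stellar_subdivisionE)
    case 1
    then show ?thesis using downward_closedD[OF assms _ S] S by (blast intro: stellar_subdivision_keepI)
  next
    case (2 A H G)
    have "S \<inter> A \<union> S \<inter> H \<union> S \<inter> G \<in> stellar_subdivision \<Delta> F a"
      using 2(2,3) downward_closedD[OF downward_closed_link[OF assms] 2(4)]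
      by (intro stellar_subdivision_joinI) auto
    moreover have "S \<inter> A \<union> S \<inter> H \<union> S \<inter> G = S" using S 2(1) by blast
    ultimately show ?thesis by simp
  qed
qed

lemma finite_stellar_subdivision:
  assumes "finite \<Delta>" "finite F"
  shows "finite (stellar_subdivision \<Delta> F a)"
proof -
  have "{A \<union> H \<union> G | A H G. A \<subseteq> {a} \<and> H \<subset> F \<and> G \<in> link \<Delta> F}
        \<subseteq> (\<lambda>(A, H, G). A \<union> H \<union> G) ` (Pow {a} \<times> Pow F \<times> \<Delta>)"
  proof
    fix X assume "X \<in> {A \<union> H \<union> G | A H G. A \<subseteq> {a} \<and> H \<subset> F \<and> G \<in> link \<Delta> F}"
    then obtain A H G where "X = A \<union> H \<union> G" "A \<subseteq> {a}" "H \<subset> F" "G \<in> \<Delta>"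
      unfolding link_def by blast
    then show "X \<in> (\<lambda>(A, H, G). A \<union> H \<union> G) ` (Pow {a} \<times> Pow F \<times> \<Delta>)"
      by (intro image_eqI[of _ _ "(A, H, G)"]) auto
  qed
  moreover have "finite (Pow {a} \<times> Pow F \<times> \<Delta>)" using assms by simp
  ultimately have "finite {A \<union> H \<union> G | A H G. A \<subseteq> {a} \<and> H \<subset> F \<and> G \<in> link \<Delta> F}"
    by (meson finite_imageI finite_subset)
  then show ?thesis unfolding stellar_subdivision_def using assms(1) by simp
qed

lemma stellar_subdivision_face_card_le:
  assumes "\<forall>\<sigma>\<in>\<Delta>. finite \<sigma> \<and> card \<sigma> \<le> n"
  shows "\<forall>\<sigma>\<in>stellar_subdivision \<Delta> F a. finite \<sigma> \<and> card \<sigma> \<le> n"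
proof
  fix S assume "S \<in> stellar_subdivision \<Delta> F a"
  then show "finite S \<and> card S \<le> n"
  proof (cases rule: stellar_subdivisionE)
    case 1 then show ?thesis using assms by auto
  next
    case (2 A H G)
    have FG: "F \<union> G \<in> \<Delta>" "F \<inter> G = {}" using 2(4) unfolding link_def by auto
    then have fin: "finite F" "finite G" "card (F \<union> G) \<le> n" using assms by auto
    have "card A \<le> 1" using 2(2) by (auto dest: subset_singletonD)
    moreover have "card H < card F" using 2(3) fin(1) by (rule psubset_card_mono[rotated])
    moreover have "card S \<le> card A + card H + card G" unfolding 2(1)
      by (meson add_mono card_Un_le le_trans order_refl)
    moreover have "card (F \<union> G) = card F + card G" using card_Un_disjoint[OF fin(1,2) FG(2)] .
    ultimately have "card S \<le> n" using fin(3) by linarith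
    moreover have "finite A" "finite H"
      using finite_subset[OF 2(2)] finite_subset[OF psubset_imp_subset[OF 2(3)] fin(1)] by auto
    ultimately show ?thesis using 2(1) fin(2) by simp
  qed
qed

lemma simplicial_complex_stellar_subdivision:
  assumes "simplicial_complex \<Delta>" "F \<in> \<Delta>"
  shows "simplicial_complex (stellar_subdivision \<Delta> F a)"
proof -
  have fin: "finite \<Delta>" "\<forall>F\<in>\<Delta>. finite F" "downward_closed \<Delta>"
    using assms(1) unfolding simplicial_complex_altdef by auto
  have "\<forall>X\<in>stellar_subdivision \<Delta> F a. finite X"
  proof
    fix X assume "X \<in> stellar_subdivision \<Delta> F a"
    then show "finite X"
    proof (cases rule: stellar_subdivisionE)
      case 1 then show ?thesis using fin(2) by blast
    next
      case (2 A H G)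
      then have "F \<union> G \<in> \<Delta>" unfolding link_def by auto
      then have "finite F" "finite G" using fin(2) by auto
      moreover have "finite A" "finite H"
        using finite_subset[OF 2(2)] finite_subset[OF psubset_imp_subset[OF 2(3)] calculation(1)] by auto
      ultimately show ?thesis using 2(1) by simp
    qed
  qed
  moreover have "finite (stellar_subdivision \<Delta> F a)"
    using finite_stellar_subdivision[OF fin(1)] fin(2) assms(2) by simp
  ultimately show ?thesis
    using stellar_subdivision_downward_closed[OF fin(3)] unfolding simplicial_complex_altdef by blast
qed

lemma vertices_stellar_subdivision:
  assumes "F \<in> \<Delta>"
  shows "vertices (stellar_subdivision \<Delta> F a) \<subseteq> insert a (vertices \<Delta>)"
proof
  fix v assume "v \<in> vertices (stellar_subdivision \<Delta> F a)"
  then obtain X where X: "v \<in> X" "X \<in> stellar_subdivision \<Delta> F a" unfolding vertices_def by auto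
  from X(2) show "v \<in> insert a (vertices \<Delta>)"
  proof (cases rule: stellar_subdivisionE)
    case 1 then show ?thesis using X(1) unfolding vertices_def by blast
  next
    case (2 A H G)
    then have "F \<union> G \<in> \<Delta>" unfolding link_def by auto
    then have "F \<union> G \<subseteq> vertices \<Delta>" unfolding vertices_def by blast
    then show ?thesis using 2(1-3) X(1) by blast
  qed
qed

lemma stellar_subdivision_mono:
  assumes "X \<subseteq> \<Delta>"
  shows "stellar_subdivision X F a \<subseteq> stellar_subdivision \<Delta> F a"
proof -
  have "link X F \<subseteq> link \<Delta> F" using assms unfolding link_def by auto
  then show ?thesis using assms unfolding stellar_subdivision_def by blast
qed

definition boundary_join :: "'a set \<Rightarrow> 'a set set \<Rightarrow> 'a set set" where
  "boundary_join F \<Lambda> = {H \<union> G | H G. H \<subset> F \<and> G \<in> \<Lambda>}"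

lemma boundary_joinI: "H \<subset> F \<Longrightarrow> G \<in> \<Lambda> \<Longrightarrow> H \<union> G \<in> boundary_join F \<Lambda>"
  unfolding boundary_join_def by blast

lemma boundary_joinE:
  assumes "X \<in> boundary_join F \<Lambda>"
  obtains H G where "X = H \<union> G" "H \<subset> F" "G \<in> \<Lambda>"
  using assms unfolding boundary_join_def by blast

lemma stellar_subdivision_eq:
  "stellar_subdivision \<Delta> F a =
     {G \<in> \<Delta>. \<not> F \<subseteq> G} \<union> boundary_join F (link \<Delta> F) \<union> insert a ` boundary_join F (link \<Delta> F)"
    (is "_ = ?K \<union> ?J \<union> insert a ` ?J")
proof (intro equalityI subsetI)
  fix X assume "X \<in> stellar_subdivision \<Delta> F a"
  then show "X \<in> ?K \<union> ?J \<union> insert a ` ?J"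
  proof (cases rule: stellar_subdivisionE)
    case (2 A H G)
    then have "H \<union> G \<in> ?J" by (simp add: boundary_joinI)
    moreover have "X = H \<union> G \<or> X = insert a (H \<union> G)" using 2(1,2) by (auto dest: subset_singletonD)
    ultimately show ?thesis by blast
  qed simp
next
  fix X assume "X \<in> ?K \<union> ?J \<union> insert a ` ?J"
  then consider "X \<in> ?K" | "X \<in> ?J" | Y where "X = insert a Y" "Y \<in> ?J" by blast
  then show "X \<in> stellar_subdivision \<Delta> F a"
  proof cases
    case 1 then show ?thesis by (simp add: stellar_subdivision_keepI)
  next
    case 2
    then obtain H G where "X = H \<union> G" "H \<subset> F" "G \<in> link \<Delta> F" by (rule boundary_joinE)
    then show ?thesis using stellar_subdivision_joinI[of "{}" a H F G] by simp
  next
    case (3 Y)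
    from 3(2) obtain H G where "Y = H \<union> G" "H \<subset> F" "G \<in> link \<Delta> F" by (rule boundary_joinE)
    then show ?thesis using 3(1) stellar_subdivision_joinI[of "{a}" a H F G] by simp
  qed
qed

lemma boundary_join_cone_union:
  "boundary_join F (P \<union> insert a ` Q) = boundary_join F P \<union> insert a ` boundary_join F Q"
proof (intro equalityI subsetI)
  fix X assume "X \<in> boundary_join F (P \<union> insert a ` Q)"
  then obtain H G where X: "X = H \<union> G" "H \<subset> F" "G \<in> P \<union> insert a ` Q"
    by (rule boundary_joinE)
  show "X \<in> boundary_join F P \<union> insert a ` boundary_join F Q"
  proof (cases "G \<in> P")
    case True
    then show ?thesis using boundary_joinI[OF X(2) True] X(1) by simp
  next
    case False
    then obtain G' where G': "G = insert a G'" "G' \<in> Q" using X(3) by blast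
    have "X = insert a (H \<union> G')" using X(1) G'(1) by simp
    then show ?thesis using boundary_joinI[OF X(2) G'(2)] by simp
  qed
next
  fix X assume "X \<in> boundary_join F P \<union> insert a ` boundary_join F Q"
  then consider "X \<in> boundary_join F P" | Y where "X = insert a Y" "Y \<in> boundary_join F Q"
    by blast
  then show "X \<in> boundary_join F (P \<union> insert a ` Q)"
  proof cases
    case 1
    then obtain H G where "X = H \<union> G" "H \<subset> F" "G \<in> P" by (rule boundary_joinE)
    then show ?thesis using boundary_joinI[of H F G "P \<union> insert a ` Q"] by simp
  next
    case (2 Y)
    from 2(2) obtain H G where "Y = H \<union> G" "H \<subset> F" "G \<in> Q" by (rule boundary_joinE)
    moreover have "X = H \<union> insert a G" using 2(1) calculation(1) by simp
    ultimately show ?thesis using boundary_joinI[of H F "insert a G" "P \<union> insert a ` Q"] by simp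
  qed
qed

lemma link_cone_union:
  assumes a: "a \<notin> vertices M" and XM: "X \<subseteq> M" and t: "\<tau> \<in> M"
  shows "link (M \<union> insert a ` X) \<tau> = link M \<tau> \<union> insert a ` link X \<tau>"
proof (intro equalityI subsetI)
  have a_free: "a \<notin> S" if "S \<in> M" for S using a that unfolding vertices_def by blast
  fix G assume G: "G \<in> link (M \<union> insert a ` X) \<tau>"
  then have G1: "G \<in> M \<union> insert a ` X" "\<tau> \<inter> G = {}" "\<tau> \<union> G \<in> M \<union> insert a ` X"
    unfolding link_def by auto
  show "G \<in> link M \<tau> \<union> insert a ` link X \<tau>"
  proof (cases "G \<in> M")
    case True
    then have "\<tau> \<union> G \<notin> insert a ` X" using a_free t by blast
    then have "\<tau> \<union> G \<in> M" using G1(3) by blast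
    then show ?thesis using True G1(2) unfolding link_def by blast
  next
    case False
    then obtain G' where G': "G = insert a G'" "G' \<in> X" using G1(1) by blast
    have "\<tau> \<union> G \<notin> M" using a_free G'(1) by blast
    then obtain S where S: "\<tau> \<union> G = insert a S" "S \<in> X" using G1(3) by blast
    have "a \<notin> S" "a \<notin> G'" "a \<notin> \<tau>" using S(2) G'(2) XM t a_free by blast+
    then have "\<tau> \<union> G' = (\<tau> \<union> G) - {a}" using G'(1) by auto
    also have "\<dots> = S" using S(1) \<open>a \<notin> S\<close> by auto
    finally have "\<tau> \<union> G' = S" .
    then have "G' \<in> link X \<tau>" unfolding link_def using S(2) G'(2) G1(2) G'(1) by blast
    then show ?thesis using G'(1) by blast
  qed
next
  have "a \<notin> \<tau>" using a t unfolding vertices_def by blast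
  fix G assume "G \<in> link M \<tau> \<union> insert a ` link X \<tau>"
  then consider "G \<in> link M \<tau>" | G' where "G = insert a G'" "G' \<in> link X \<tau>" by blast
  then show "G \<in> link (M \<union> insert a ` X) \<tau>"
  proof cases
    case 1 then show ?thesis unfolding link_def by blast
  next
    case (2 G')
    then have "G' \<in> X" "\<tau> \<inter> G' = {}" "\<tau> \<union> G' \<in> X" unfolding link_def by auto
    moreover have "\<tau> \<union> G = insert a (\<tau> \<union> G')" using 2(1) by blast
    ultimately show ?thesis unfolding link_def using 2(1) \<open>a \<notin> \<tau>\<close> by blast
  qed
qed

lemma stellar_subdivision_cone_union:
  assumes a: "a \<notin> vertices M" and XM: "X \<subseteq> M" and t: "\<tau> \<in> M"
  shows "stellar_subdivision (M \<union> insert a ` X) \<tau> b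
       = stellar_subdivision M \<tau> b \<union> insert a ` stellar_subdivision X \<tau> b"
proof -
  have "a \<notin> \<tau>" using a t unfolding vertices_def by blast
  then have "{G \<in> M \<union> insert a ` X. \<not> \<tau> \<subseteq> G} = {G \<in> M. \<not> \<tau> \<subseteq> G} \<union> insert a ` {G \<in> X. \<not> \<tau> \<subseteq> G}"
    by blast
  then show ?thesis
    unfolding stellar_subdivision_eq link_cone_union[OF assms] boundary_join_cone_union
    by (simp add: image_Un image_image insert_commute Un_ac)
qed

lemma downward_closed_boundary_join:
  assumes "downward_closed \<Lambda>"
  shows "downward_closed (boundary_join F \<Lambda>)"
  unfolding downward_closed_def
proof (intro ballI allI impI)
  fix X S assume X: "X \<in> boundary_join F \<Lambda>" and S: "S \<subseteq> X"
  from X obtain H G where X: "X = H \<union> G" "H \<subset> F" "G \<in> \<Lambda>" by (rule boundary_joinE)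
  have "S \<inter> H \<subset> F" using X(2) by blast
  moreover have "S \<inter> G \<in> \<Lambda>" using downward_closedD[OF assms X(3)] by blast
  ultimately have "S \<inter> H \<union> S \<inter> G \<in> boundary_join F \<Lambda>" by (rule boundary_joinI)
  moreover have "S \<inter> H \<union> S \<inter> G = S" using S X(1) by blast
  ultimately show "S \<in> boundary_join F \<Lambda>" by simp
qed

lemma boundary_join_edgeE:
  assumes "X \<in> boundary_join {w, z} \<Lambda>"
  obtains G where "G \<in> \<Lambda>" "X = G \<or> X = insert w G \<or> X = insert z G"
proof -
  obtain H G where "X = H \<union> G" "H \<subset> {w, z}" "G \<in> \<Lambda>" using assms by (rule boundary_joinE)
  moreover have "H = {} \<or> H = {w} \<or> H = {z}" using \<open>H \<subset> {w, z}\<close> by auto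
  ultimately show thesis using that by auto
qed

text \<open>Keeping the new vertices out of a reserved set \<open>A\<close> lets the steps be lifted to cones
  with apex in \<open>A\<close>.\<close>

definition stellar_step_avoiding :: "'a set \<Rightarrow> 'a set set \<Rightarrow> 'a set set \<Rightarrow> bool" where
  "stellar_step_avoiding A \<Delta> \<Delta>' \<longleftrightarrow>
     (\<exists>F a. F \<in> \<Delta> \<and> F \<noteq> {} \<and> a \<notin> vertices \<Delta> \<and> a \<notin> A \<and> \<Delta>' = stellar_subdivision \<Delta> F a)"

lemma rtranclp_stellar_step_avoiding_imp:
  "(stellar_step_avoiding A)\<^sup>*\<^sup>* \<Delta> \<Delta>' \<Longrightarrow> stellar_step\<^sup>*\<^sup>* \<Delta> \<Delta>'"
proof -
  have "stellar_step_avoiding A \<le> stellar_step"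
    unfolding stellar_step_avoiding_def stellar_step_def by blast
  then show "(stellar_step_avoiding A)\<^sup>*\<^sup>* \<Delta> \<Delta>' \<Longrightarrow> stellar_step\<^sup>*\<^sup>* \<Delta> \<Delta>'"
    using rtranclp_mono by blast
qed

lemma cone_lift_stellar_step:
  assumes step: "stellar_step_avoiding (insert a A) M M'" and a: "a \<notin> vertices M"
    and X: "X \<subseteq> M" "downward_closed X" "\<forall>\<sigma>\<in>X. finite \<sigma> \<and> card \<sigma> \<le> n"
    and M: "simplicial_complex M"
  shows "\<exists>X'. stellar_step_avoiding A (M \<union> insert a ` X) (M' \<union> insert a ` X')
     \<and> X' \<subseteq> M' \<and> downward_closed X' \<and> (\<forall>\<sigma>\<in>X'. finite \<sigma> \<and> card \<sigma> \<le> n)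
     \<and> a \<notin> vertices M' \<and> simplicial_complex M'"
proof -
  obtain \<tau> b where \<tau>b: "\<tau> \<in> M" "\<tau> \<noteq> {}" "b \<notin> vertices M" "b \<notin> insert a A"
    "M' = stellar_subdivision M \<tau> b"
    using step unfolding stellar_step_avoiding_def by blast
  define X' where "X' = stellar_subdivision X \<tau> b"
  have "vertices (M \<union> insert a ` X) \<subseteq> insert a (vertices M)"
    using vertices_mono[OF X(1)] unfolding vertices_def by blast
  then have "stellar_step_avoiding A (M \<union> insert a ` X) (M' \<union> insert a ` X')"
    unfolding stellar_step_avoiding_def X'_def \<tau>b(5)
      stellar_subdivision_cone_union[OF a X(1) \<tau>b(1), symmetric]
    using \<tau>b(1-4) by blast
  moreover have "a \<notin> vertices M'"
    using vertices_stellar_subdivision[OF \<tau>b(1), of b] \<tau>b(4,5) a by blast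
  ultimately show ?thesis
    using stellar_subdivision_mono[OF X(1)] stellar_subdivision_downward_closed[OF X(2)]
      stellar_subdivision_face_card_le[OF X(3)] simplicial_complex_stellar_subdivision[OF M \<tau>b(1)]
    unfolding X'_def \<tau>b(5) by blast
qed

lemma cone_lift_stellar_steps:
  assumes steps: "(stellar_step_avoiding (insert a A))\<^sup>*\<^sup>* M M'" and a: "a \<notin> vertices M"
    and X: "X \<subseteq> M" "downward_closed X" "\<forall>\<sigma>\<in>X. finite \<sigma> \<and> card \<sigma> \<le> n"
    and M: "simplicial_complex M"
  shows "\<exists>X'. (stellar_step_avoiding A)\<^sup>*\<^sup>* (M \<union> insert a ` X) (M' \<union> insert a ` X')
     \<and> X' \<subseteq> M' \<and> downward_closed X' \<and> (\<forall>\<sigma>\<in>X'. finite \<sigma> \<and> card \<sigma> \<le> n)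
     \<and> a \<notin> vertices M' \<and> simplicial_complex M'"
  using steps
proof (induction rule: rtranclp_induct)
  case base
  then show ?case using a X M by blast
next
  case (step M1 M2)
  then obtain X1 where X1: "(stellar_step_avoiding A)\<^sup>*\<^sup>* (M \<union> insert a ` X) (M1 \<union> insert a ` X1)"
    "X1 \<subseteq> M1" "downward_closed X1" "\<forall>\<sigma>\<in>X1. finite \<sigma> \<and> card \<sigma> \<le> n"
    "a \<notin> vertices M1" "simplicial_complex M1"
    by blast
  from cone_lift_stellar_step[OF step(2) X1(5,2,3,4,6)] obtain X2 where
    "stellar_step_avoiding A (M1 \<union> insert a ` X1) (M2 \<union> insert a ` X2)" "X2 \<subseteq> M2"
    "downward_closed X2" "\<forall>\<sigma>\<in>X2. finite \<sigma> \<and> card \<sigma> \<le> n" "a \<notin> vertices M2" "simplicial_complex M2"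
    by blast
  then show ?case using rtranclp.rtrancl_into_rtrancl[OF X1(1)] by blast
qed

lemma stellar_subdivision_facet:
  assumes L: "simplicial_complex L" and F: "F \<in> L" and facet: "\<forall>G\<in>L. F \<subseteq> G \<longrightarrow> G = F"
  shows "stellar_subdivision L F a = (L - {F}) \<union> insert a ` {H. H \<subset> F}"
proof -
  have "link L F = {{}}"
    using facet F downward_closedD[of L F "{}"] L unfolding link_def simplicial_complex_altdef
    by auto
  moreover have "boundary_join F {{}} = {H. H \<subset> F}" unfolding boundary_join_def by auto
  moreover have "{G \<in> L. \<not> F \<subseteq> G} = L - {F}" using facet by blast
  moreover have "{H. H \<subset> F} \<subseteq> L - {F}" using downward_closedD[of L F] L F
    unfolding simplicial_complex_altdef by blast
  ultimately show ?thesis unfolding stellar_subdivision_eq by (simp add: Un_absorb2)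
qed

lemma fresh_injection:
  assumes "infinite (UNIV :: 'a set)" "finite P" "finite T"
  obtains f :: "'b \<Rightarrow> 'a" where "inj_on f P" "f ` P \<inter> T = {}"
proof -
  have "infinite (UNIV - T)" using assms(1,3) by auto
  then obtain h :: "nat \<Rightarrow> 'a" where h: "inj h" "range h \<subseteq> UNIV - T"
    using infinite_countable_subset by blast
  obtain e :: "'b \<Rightarrow> nat" where "inj_on e P" using finite_imp_inj_to_nat_seg[OF assms(2)] by metis
  then have "inj_on (h \<circ> e) P" using h(1) by (simp add: comp_inj_on inj_on_subset)
  moreover have "(h \<circ> e) ` P \<inter> T = {}" using h(2) by auto
  ultimately show thesis by (rule that)
qed

text \<open>The cones \<open>w * Y w\<close>, \<open>w \<in> W\<close>, over the properly colored complex \<open>\<Gamma>\<close> still have uncolored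
  apexes. Apex \<open>w\<close> is to get a color in \<open>{..D}\<close> outside \<open>B w\<close>, and every face of \<open>Y w\<close> has at most
  \<open>n\<close> vertices whose color is not in \<open>B w\<close>.\<close>

definition pending_cones ::
    "nat \<Rightarrow> 'a set set \<Rightarrow> ('a \<Rightarrow> nat) \<Rightarrow> 'a set \<Rightarrow> ('a \<Rightarrow> 'a set set) \<Rightarrow> ('a \<Rightarrow> nat set) \<Rightarrow> nat \<Rightarrow> bool" where
  "pending_cones D \<Gamma> \<chi> W Y B n \<longleftrightarrow>
     simplicial_complex \<Gamma> \<and> proper_coloring_on \<Gamma> \<chi> \<and> finite W \<and> W \<inter> vertices \<Gamma> = {} \<and>
     (\<forall>w\<in>W. Y w \<subseteq> \<Gamma> \<and> downward_closed (Y w) \<and> B w \<subseteq> {..D} \<and> card (B w) + n \<le> D \<and>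
        (\<forall>\<sigma>\<in>Y w. card {v\<in>\<sigma>. \<chi> v \<notin> B w} \<le> n))"

text \<open>One round: \<open>c w\<close> is the color chosen for the apex \<open>w\<close>, and \<open>f (w, z)\<close> is the new vertex
  subdividing the edge \<open>{w, z}\<close> when \<open>z\<close> already has color \<open>c w\<close>.\<close>

locale cone_recoloring =
  fixes \<Gamma> :: "'a set set" and \<chi> :: "'a \<Rightarrow> nat" and W :: "'a set" and Y :: "'a \<Rightarrow> 'a set set"
    and c :: "'a \<Rightarrow> nat" and f :: "'a \<times> 'a \<Rightarrow> 'a"
  assumes complex: "simplicial_complex \<Gamma>" and proper: "proper_coloring_on \<Gamma> \<chi>"
    and finite_apexes: "finite W" and apexes_fresh: "W \<inter> vertices \<Gamma> = {}"
    and base_subcomplex: "\<And>w. w \<in> W \<Longrightarrow> Y w \<subseteq> \<Gamma>"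
    and base_closed: "\<And>w. w \<in> W \<Longrightarrow> downward_closed (Y w)"
    and inj_f: "inj_on f (W \<times> vertices \<Gamma>)"
    and f_fresh: "f ` (W \<times> vertices \<Gamma>) \<inter> (vertices \<Gamma> \<union> W) = {}"
begin

definition conflicts :: "('a \<times> 'a) set" where
  "conflicts = {(w, z). w \<in> W \<and> z \<in> vertices (Y w) \<and> \<chi> z = c w}"

definition cones :: "('a \<times> 'a) set \<Rightarrow> 'a set set" where
  "cones S = {insert w \<sigma> | w \<sigma>. w \<in> W \<and> \<sigma> \<in> Y w \<and> (\<forall>z\<in>\<sigma>. (w, z) \<notin> S)}"

text \<open>The link \<open>\<partial>{w, z} * lk z\<close> of the vertex subdividing the edge \<open>{w, z}\<close> of the cone \<open>w * Y w\<close>.\<close>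

definition edge_vertex_link :: "'a \<Rightarrow> 'a \<Rightarrow> 'a set set" where
  "edge_vertex_link w z = boundary_join {w, z} (link (Y w) {z})"

definition new_stars :: "('a \<times> 'a) set \<Rightarrow> 'a set set" where
  "new_stars S = (\<Union>(w, z)\<in>S. insert (f (w, z)) ` edge_vertex_link w z)"

definition partial_subdivision :: "('a \<times> 'a) set \<Rightarrow> 'a set set" where
  "partial_subdivision S = \<Gamma> \<union> cones S \<union> new_stars S"

lemma base_face_subset: "w \<in> W \<Longrightarrow> \<sigma> \<in> Y w \<Longrightarrow> \<sigma> \<subseteq> vertices \<Gamma>"
  using base_subcomplex unfolding vertices_def by blast

lemma apex_notin_vertices: "w \<in> W \<Longrightarrow> w \<notin> vertices \<Gamma>"
  using apexes_fresh by blast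

lemma conflictsD:
  assumes "(w, z) \<in> conflicts"
  shows "w \<in> W" "z \<in> vertices \<Gamma>" "\<chi> z = c w" "{z} \<in> Y w" "z \<noteq> w"
proof -
  show w: "w \<in> W" and "\<chi> z = c w" using assms unfolding conflicts_def by auto
  obtain \<sigma> where "z \<in> \<sigma>" "\<sigma> \<in> Y w" using assms unfolding conflicts_def vertices_def by auto
  then show "{z} \<in> Y w" "z \<in> vertices \<Gamma>"
    using downward_closedD[OF base_closed[OF w]] base_face_subset[OF w] by auto
  then show "z \<noteq> w" using apex_notin_vertices[OF w] by blast
qed

lemma conflicts_subset: "conflicts \<subseteq> W \<times> vertices \<Gamma>"
  using conflictsD by auto

lemma subdivision_vertex_fresh:
  assumes "p \<in> conflicts"
  shows "f p \<notin> vertices \<Gamma>" "f p \<notin> W"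
proof -
  obtain w z where "p = (w, z)" by (cases p)
  then have "p \<in> W \<times> vertices \<Gamma>" using conflictsD assms by blast
  then show "f p \<notin> vertices \<Gamma>" "f p \<notin> W" using f_fresh by blast+
qed

lemma link_vertex_no_conflict:
  assumes wz: "(w, z) \<in> conflicts" and G: "G \<in> link (Y w) {z}" and y: "y \<in> G"
  shows "(w, y) \<notin> conflicts"
proof
  assume wy: "(w, y) \<in> conflicts"
  have w: "w \<in> W" using conflictsD(1)[OF wz] .
  have "insert z G \<in> Y w" "z \<notin> G" using G unfolding link_singleton by auto
  moreover have "{y, z} \<subseteq> insert z G" using y by blast
  ultimately have "{y, z} \<in> \<Gamma>" "y \<noteq> z"
    using downward_closedD[OF base_closed[OF w]] base_subcomplex[OF w] y by blast+
  then have "\<chi> y \<noteq> \<chi> z" using proper unfolding proper_coloring_on_def by blast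
  then show False using conflictsD(3)[OF wz] conflictsD(3)[OF wy] by simp
qed

lemma edge_vertex_link_subset:
  assumes "(w, z) \<in> conflicts" "\<tau> \<in> edge_vertex_link w z"
  shows "\<tau> \<subseteq> insert w (vertices \<Gamma>)"
proof -
  from assms(2) obtain G where G: "G \<in> link (Y w) {z}" "\<tau> = G \<or> \<tau> = insert w G \<or> \<tau> = insert z G"
    unfolding edge_vertex_link_def by (rule boundary_join_edgeE)
  have "G \<subseteq> vertices \<Gamma>" using G(1) base_face_subset conflictsD(1)[OF assms(1)]
    unfolding link_def by blast
  then show ?thesis using G(2) conflictsD(2)[OF assms(1)] by blast
qed

lemma conesI: "w \<in> W \<Longrightarrow> \<sigma> \<in> Y w \<Longrightarrow> (\<forall>z\<in>\<sigma>. (w, z) \<notin> S) \<Longrightarrow> insert w \<sigma> \<in> cones S"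
  unfolding cones_def by blast

lemma conesE:
  assumes "X \<in> cones S"
  obtains w \<sigma> where "X = insert w \<sigma>" "w \<in> W" "\<sigma> \<in> Y w" "\<forall>z\<in>\<sigma>. (w, z) \<notin> S"
  using assms unfolding cones_def by blast

lemma new_starsE:
  assumes "X \<in> new_stars S"
  obtains w z \<tau> where "(w, z) \<in> S" "X = insert (f (w, z)) \<tau>" "\<tau> \<in> edge_vertex_link w z"
  using assms unfolding new_stars_def by blast

lemma edge_in_cone_iff:
  assumes "(w0, z0) \<in> conflicts" "w \<in> W" "\<sigma> \<in> Y w"
  shows "{w0, z0} \<subseteq> insert w \<sigma> \<longleftrightarrow> w = w0 \<and> z0 \<in> \<sigma>"
  using base_face_subset[OF assms(2,3)] conflictsD[OF assms(1)] apex_notin_vertices by blast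

lemma cones_without_edge:
  assumes "(w0, z0) \<in> conflicts"
  shows "{X \<in> cones S. \<not> {w0, z0} \<subseteq> X} = cones (insert (w0, z0) S)"
proof (intro equalityI subsetI)
  fix X assume X0: "X \<in> {X \<in> cones S. \<not> {w0, z0} \<subseteq> X}"
  then obtain w \<sigma> where X: "X = insert w \<sigma>" "w \<in> W" "\<sigma> \<in> Y w" "\<forall>z\<in>\<sigma>. (w, z) \<notin> S"
    by (blast elim: conesE)
  from X0 have "\<not> {w0, z0} \<subseteq> X" by blast
  then have "\<not> (w = w0 \<and> z0 \<in> \<sigma>)" using edge_in_cone_iff[OF assms X(2,3)] X(1) by blast
  then have "\<forall>z\<in>\<sigma>. (w, z) \<notin> insert (w0, z0) S" using X(4) by auto
  then show "X \<in> cones (insert (w0, z0) S)" using conesI[OF X(2,3)] X(1) by simp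
next
  fix X assume "X \<in> cones (insert (w0, z0) S)"
  then obtain w \<sigma> where X: "X = insert w \<sigma>" "w \<in> W" "\<sigma> \<in> Y w" "\<forall>z\<in>\<sigma>. (w, z) \<notin> insert (w0, z0) S"
    by (rule conesE)
  then have "\<not> {w0, z0} \<subseteq> X" using edge_in_cone_iff[OF assms X(2,3)] by blast
  moreover have "\<forall>z\<in>\<sigma>. (w, z) \<notin> S" using X(4) by auto
  then have "X \<in> cones S" using conesI[OF X(2,3)] X(1) by simp
  ultimately show "X \<in> {X \<in> cones S. \<not> {w0, z0} \<subseteq> X}" by blast
qed

lemma new_stars_without_edge:
  assumes S: "S \<subseteq> conflicts" and p0: "(w0, z0) \<in> conflicts" "(w0, z0) \<notin> S"
    and X: "X \<in> new_stars S"
  shows "\<not> {w0, z0} \<subseteq> X"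
proof
  assume e: "{w0, z0} \<subseteq> X"
  from X obtain w z \<tau> where X': "(w, z) \<in> S" "X = insert (f (w, z)) \<tau>" "\<tau> \<in> edge_vertex_link w z"
    by (rule new_starsE)
  have wz: "(w, z) \<in> conflicts" using X'(1) S by blast
  from X'(3) obtain G where G: "G \<in> link (Y w) {z}" "\<tau> = G \<or> \<tau> = insert w G \<or> \<tau> = insert z G"
    unfolding edge_vertex_link_def by (rule boundary_join_edgeE)
  have G_sub: "G \<subseteq> vertices \<Gamma>" "z \<notin> G"
    using G(1) base_face_subset[OF conflictsD(1)[OF wz]] unfolding link_singleton by auto
  have "f (w, z) \<noteq> w0" "f (w, z) \<noteq> z0"
    using subdivision_vertex_fresh[OF wz] conflictsD(1,2)[OF p0(1)] by auto
  then have "w0 \<in> \<tau>" "z0 \<in> \<tau>" using e X'(2) by auto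
  moreover have "w0 \<notin> G" "w0 \<noteq> z"
    using G_sub(1) conflictsD(2)[OF wz] apex_notin_vertices[OF conflictsD(1)[OF p0(1)]] by auto
  ultimately have "w0 = w" using G(2) by auto
  moreover have "z0 \<noteq> w0" using conflictsD(5)[OF p0(1)] .
  ultimately have "z0 = z \<or> z0 \<in> G" using \<open>z0 \<in> \<tau>\<close> G(2) by auto
  then show False
  proof
    assume "z0 = z" then show False using X'(1) p0(2) \<open>w0 = w\<close> by simp
  next
    assume "z0 \<in> G" then show False using link_vertex_no_conflict[OF wz G(1)] p0(1) \<open>w0 = w\<close> by blast
  qed
qed

lemma faces_containing_edge:
  assumes S: "S \<subseteq> conflicts" and p0: "(w0, z0) \<in> conflicts" "(w0, z0) \<notin> S"
    and X: "X \<in> partial_subdivision S" and e: "{w0, z0} \<subseteq> X"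
  obtains \<sigma> where "X = insert w0 \<sigma>" "\<sigma> \<in> Y w0" "z0 \<in> \<sigma>" "\<forall>z\<in>\<sigma>. (w0, z) \<notin> S"
proof -
  have "X \<notin> \<Gamma>" using e apex_notin_vertices[OF conflictsD(1)[OF p0(1)]] unfolding vertices_def by blast
  moreover have "X \<notin> new_stars S" using new_stars_without_edge[OF S p0] e by blast
  ultimately have "X \<in> cones S" using X unfolding partial_subdivision_def by blast
  then obtain w \<sigma> where X': "X = insert w \<sigma>" "w \<in> W" "\<sigma> \<in> Y w" "\<forall>z\<in>\<sigma>. (w, z) \<notin> S"
    by (rule conesE)
  moreover have "w = w0 \<and> z0 \<in> \<sigma>" using edge_in_cone_iff[OF p0(1) X'(2,3)] e X'(1) by simp
  ultimately show thesis using that[of \<sigma>] by simp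
qed

lemma link_partial_subdivision_edge:
  assumes S: "S \<subseteq> conflicts" and p0: "(w0, z0) \<in> conflicts" "(w0, z0) \<notin> S"
  shows "link (partial_subdivision S) {w0, z0} = link (Y w0) {z0}"
proof (intro equalityI subsetI)
  have w0: "w0 \<in> W" using conflictsD(1)[OF p0(1)] .
  fix G assume "G \<in> link (partial_subdivision S) {w0, z0}"
  then have G: "{w0, z0} \<inter> G = {}" "{w0, z0} \<union> G \<in> partial_subdivision S"
    unfolding link_def by auto
  obtain \<sigma> where \<sigma>: "{w0, z0} \<union> G = insert w0 \<sigma>" "\<sigma> \<in> Y w0" "z0 \<in> \<sigma>"
    "\<forall>z\<in>\<sigma>. (w0, z) \<notin> S"
    by (rule faces_containing_edge[OF S p0 G(2)]) blast
  have "w0 \<notin> \<sigma>" using base_face_subset[OF w0 \<sigma>(2)] apex_notin_vertices[OF w0] by blast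
  then have "\<sigma> = insert w0 \<sigma> - {w0}" by simp
  also have "\<dots> = ({w0, z0} \<union> G) - {w0}" using \<sigma>(1) by simp
  also have "\<dots> = insert z0 G" using G(1) conflictsD(5)[OF p0(1)] by auto
  finally have "\<sigma> = insert z0 G" .
  then show "G \<in> link (Y w0) {z0}" using \<sigma>(2) G(1) downward_closedD[OF base_closed[OF w0] \<sigma>(2)]
    unfolding link_singleton by blast
next
  have w0: "w0 \<in> W" using conflictsD(1)[OF p0(1)] .
  fix G assume G: "G \<in> link (Y w0) {z0}"
  then have G': "G \<in> Y w0" "z0 \<notin> G" "insert z0 G \<in> Y w0" unfolding link_singleton by auto
  have "\<forall>z\<in>insert z0 G. (w0, z) \<notin> S"
    using p0(2) link_vertex_no_conflict[OF p0(1) G] S by blast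
  then have "insert w0 (insert z0 G) \<in> partial_subdivision S"
    using conesI[OF w0 G'(3)] unfolding partial_subdivision_def by blast
  moreover have "G \<in> partial_subdivision S"
    using G'(1) base_subcomplex[OF w0] unfolding partial_subdivision_def by blast
  moreover have "w0 \<notin> G" using base_face_subset[OF w0 G'(1)] apex_notin_vertices[OF w0] by blast
  ultimately show "G \<in> link (partial_subdivision S) {w0, z0}"
    using G'(2) unfolding link_def by simp
qed

lemma edge_vertex_link_subset_cones:
  assumes "(w, z) \<in> conflicts" "S \<subseteq> conflicts"
  shows "edge_vertex_link w z \<subseteq> \<Gamma> \<union> cones S"
proof
  fix \<tau> assume "\<tau> \<in> edge_vertex_link w z"
  then obtain G where G: "G \<in> link (Y w) {z}" "\<tau> = G \<or> \<tau> = insert w G \<or> \<tau> = insert z G"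
    unfolding edge_vertex_link_def by (rule boundary_join_edgeE)
  have w: "w \<in> W" using conflictsD(1)[OF assms(1)] .
  have G': "G \<in> Y w" "insert z G \<in> Y w" using G(1) unfolding link_singleton by auto
  have "\<forall>y\<in>G. (w, y) \<notin> S" using link_vertex_no_conflict[OF assms(1) G(1)] assms(2) by blast
  then have "insert w G \<in> cones S" by (rule conesI[OF w G'(1)])
  then show "\<tau> \<in> \<Gamma> \<union> cones S" using G(2) G' base_subcomplex[OF w] by blast
qed

lemma stellar_subdivision_partial_subdivision:
  assumes S: "S \<subseteq> conflicts" and p0: "(w0, z0) \<in> conflicts" "(w0, z0) \<notin> S"
  shows "stellar_subdivision (partial_subdivision S) {w0, z0} (f (w0, z0))
       = partial_subdivision (insert (w0, z0) S)"
proof -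
  let ?e = "{w0, z0}" and ?J = "edge_vertex_link w0 z0"
  have "{X \<in> \<Gamma>. \<not> ?e \<subseteq> X} = \<Gamma>"
    using apex_notin_vertices[OF conflictsD(1)[OF p0(1)]] unfolding vertices_def by blast
  moreover have "{X \<in> new_stars S. \<not> ?e \<subseteq> X} = new_stars S"
    using new_stars_without_edge[OF S p0] by blast
  ultimately have kept: "{X \<in> partial_subdivision S. \<not> ?e \<subseteq> X}
      = \<Gamma> \<union> cones (insert (w0, z0) S) \<union> new_stars S"
    unfolding partial_subdivision_def cones_without_edge[OF p0(1), symmetric] by blast
  have "?J \<subseteq> \<Gamma> \<union> cones (insert (w0, z0) S)"
    using edge_vertex_link_subset_cones[OF p0(1)] S p0(1) by blast
  moreover have "new_stars (insert (w0, z0) S) = insert (f (w0, z0)) ` ?J \<union> new_stars S"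
    unfolding new_stars_def by simp
  moreover have join: "boundary_join ?e (link (partial_subdivision S) ?e) = ?J"
    unfolding link_partial_subdivision_edge[OF S p0] edge_vertex_link_def ..
  ultimately show ?thesis
    unfolding stellar_subdivision_eq kept join unfolding partial_subdivision_def by blast
qed

lemma vertices_partial_subdivision:
  assumes "S \<subseteq> conflicts"
  shows "vertices (partial_subdivision S) \<subseteq> vertices \<Gamma> \<union> W \<union> f ` S"
proof
  fix v assume "v \<in> vertices (partial_subdivision S)"
  then obtain X where X: "v \<in> X" "X \<in> partial_subdivision S" unfolding vertices_def by blast
  then consider "X \<in> \<Gamma>" | "X \<in> cones S" | "X \<in> new_stars S"
    unfolding partial_subdivision_def by blast
  then show "v \<in> vertices \<Gamma> \<union> W \<union> f ` S"
  proof cases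
    case 1 then show ?thesis using X(1) unfolding vertices_def by blast
  next
    case 2
    then obtain w \<sigma> where "X = insert w \<sigma>" "w \<in> W" "\<sigma> \<in> Y w" by (rule conesE)
    then show ?thesis using X(1) base_face_subset by blast
  next
    case 3
    then obtain w z \<tau> where wz: "(w, z) \<in> S" "X = insert (f (w, z)) \<tau>" "\<tau> \<in> edge_vertex_link w z"
      by (rule new_starsE)
    then have "\<tau> \<subseteq> insert w (vertices \<Gamma>)" "w \<in> W"
      using edge_vertex_link_subset conflictsD(1) assms by blast+
    then show ?thesis using X(1) wz(1,2) by blast
  qed
qed

lemma partial_subdivision_steps:
  assumes "finite S" "S \<subseteq> conflicts" and A: "f ` conflicts \<inter> A = {}"
  shows "(stellar_step_avoiding A)\<^sup>*\<^sup>* (partial_subdivision {}) (partial_subdivision S)"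
  using assms(1,2)
proof (induction S rule: finite_induct)
  case empty
  then show ?case by simp
next
  case (insert p0 S)
  obtain w0 z0 where p0: "p0 = (w0, z0)" by (cases p0)
  have S: "S \<subseteq> conflicts" and p0S: "(w0, z0) \<in> conflicts" "(w0, z0) \<notin> S"
    using insert p0 by auto
  have "insert w0 {z0} \<in> partial_subdivision S"
    using conesI[OF conflictsD(1,4)[OF p0S(1)]] p0S(2) unfolding partial_subdivision_def by blast
  moreover have "f (w0, z0) \<notin> f ` S"
  proof
    assume "f (w0, z0) \<in> f ` S"
    then show False using inj_f conflicts_subset S p0S unfolding inj_on_def by blast
  qed
  then have "f (w0, z0) \<notin> vertices (partial_subdivision S) \<union> A"
    using vertices_partial_subdivision[OF S] subdivision_vertex_fresh[OF p0S(1)] A p0S(1) by blast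
  ultimately have "stellar_step_avoiding A (partial_subdivision S) (partial_subdivision (insert p0 S))"
    unfolding stellar_step_avoiding_def p0 stellar_subdivision_partial_subdivision[OF S p0S, symmetric]
    by blast
  then show ?case using rtranclp.rtrancl_into_rtrancl[OF insert.IH[OF S]] by blast
qed

definition recoloring :: "'a \<Rightarrow> nat" where
  "recoloring v = (if v \<in> W then c v else \<chi> v)"

lemma partial_subdivision_empty: "partial_subdivision {} = \<Gamma> \<union> (\<Union>w\<in>W. insert w ` Y w)"
  unfolding partial_subdivision_def cones_def new_stars_def by blast

lemma vertices_colored_part: "vertices (\<Gamma> \<union> cones S) \<subseteq> vertices \<Gamma> \<union> W"
proof
  fix v assume "v \<in> vertices (\<Gamma> \<union> cones S)"
  then obtain X where X: "v \<in> X" "X \<in> \<Gamma> \<union> cones S" unfolding vertices_def by blast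
  show "v \<in> vertices \<Gamma> \<union> W"
  proof (cases "X \<in> \<Gamma>")
    case True then show ?thesis using X(1) unfolding vertices_def by blast
  next
    case False
    then obtain w \<sigma> where "X = insert w \<sigma>" "w \<in> W" "\<sigma> \<in> Y w" using X(2) by (blast elim: conesE)
    then show ?thesis using X(1) base_face_subset by blast
  qed
qed

lemma simplicial_complex_colored_part: "simplicial_complex (\<Gamma> \<union> cones S)"
proof -
  have \<Gamma>: "finite \<Gamma>" "\<forall>F\<in>\<Gamma>. finite F" "downward_closed \<Gamma>"
    using complex unfolding simplicial_complex_altdef by auto
  have "cones S \<subseteq> (\<lambda>(w, \<sigma>). insert w \<sigma>) ` (W \<times> \<Gamma>)"
  proof
    fix X assume "X \<in> cones S"
    then obtain w \<sigma> where "X = insert w \<sigma>" "w \<in> W" "\<sigma> \<in> Y w" by (rule conesE)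
    then show "X \<in> (\<lambda>(w, \<sigma>). insert w \<sigma>) ` (W \<times> \<Gamma>)"
      using base_subcomplex by (intro image_eqI[of _ _ "(w, \<sigma>)"]) auto
  qed
  then have "finite (cones S)" using finite_apexes \<Gamma>(1) by (meson finite_SigmaI finite_imageI finite_subset)
  moreover have "\<forall>X\<in>cones S. finite X"
    using \<Gamma>(2) base_subcomplex by (blast elim: conesE)
  moreover have "downward_closed (\<Gamma> \<union> cones S)"
    unfolding downward_closed_def
  proof (intro ballI allI impI)
    fix X T assume X: "X \<in> \<Gamma> \<union> cones S" and T: "T \<subseteq> X"
    show "T \<in> \<Gamma> \<union> cones S"
    proof (cases "X \<in> \<Gamma>")
      case True then show ?thesis using downward_closedD[OF \<Gamma>(3) True T] by blast
    next
      case False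
      then obtain w \<sigma> where X': "X = insert w \<sigma>" "w \<in> W" "\<sigma> \<in> Y w" "\<forall>z\<in>\<sigma>. (w, z) \<notin> S"
        using X by (blast elim: conesE)
      have T\<sigma>: "T - {w} \<in> Y w" using downward_closedD[OF base_closed[OF X'(2)] X'(3)] T X'(1) by blast
      show ?thesis
      proof (cases "w \<in> T")
        case True
        then have "insert w (T - {w}) \<in> cones S" using X'(4) T X'(1) T\<sigma> conesI[OF X'(2)] by blast
        then show ?thesis using True by (simp add: insert_absorb)
      next
        case False
        then show ?thesis using T\<sigma> base_subcomplex[OF X'(2)] by auto
      qed
    qed
  qed
  ultimately show ?thesis using \<Gamma> unfolding simplicial_complex_altdef by blast
qed

lemma proper_coloring_colored_part: "proper_coloring_on (\<Gamma> \<union> cones conflicts) recoloring"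
  unfolding proper_coloring_on_def
proof (intro allI impI)
  fix u v assume uv: "{u, v} \<in> \<Gamma> \<union> cones conflicts" "u \<noteq> v"
  show "recoloring u \<noteq> recoloring v"
  proof (cases "{u, v} \<in> \<Gamma>")
    case True
    then have "u \<notin> W" "v \<notin> W" using apexes_fresh unfolding vertices_def by blast+
    then show ?thesis using True uv(2) proper unfolding proper_coloring_on_def recoloring_def by simp
  next
    case False
    then have "{u, v} \<in> cones conflicts" using uv(1) by blast
    then obtain w \<sigma> where X: "{u, v} = insert w \<sigma>" "w \<in> W" "\<sigma> \<in> Y w" "\<forall>z\<in>\<sigma>. (w, z) \<notin> conflicts"
      by (rule conesE)
    have differ: "recoloring y \<noteq> recoloring w" if y: "y \<in> \<sigma>" for y
    proof -
      have "y \<in> vertices (Y w)" using y X(3) unfolding vertices_def by blast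
      then have "\<chi> y \<noteq> c w" using X(2,4) y unfolding conflicts_def by blast
      moreover have "y \<notin> W" using y base_face_subset[OF X(2,3)] apexes_fresh by blast
      ultimately show ?thesis using X(2) unfolding recoloring_def by simp
    qed
    have "u \<in> insert w \<sigma>" "v \<in> insert w \<sigma>" "w \<in> {u, v}" using X(1) by blast+
    then have "u = w \<and> v \<in> \<sigma> \<or> v = w \<and> u \<in> \<sigma>" using uv(2) by blast
    then show ?thesis using differ by metis
  qed
qed

text \<open>The new apex also avoids \<open>c w\<close>, and its base faces lose the vertex \<open>z\<close> of color \<open>c w\<close>.\<close>

lemma recolored_edge_vertex_link_card:
  assumes wz: "(w, z) \<in> conflicts" and B: "c w \<notin> B" and \<tau>: "\<tau> \<in> edge_vertex_link w z"
  shows "\<exists>\<sigma>\<in>Y w. card {v\<in>\<tau>. recoloring v \<notin> insert (c w) B} < card {v\<in>\<sigma>. \<chi> v \<notin> B}"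
proof -
  have w: "w \<in> W" and z: "z \<in> vertices \<Gamma>" "\<chi> z = c w" using conflictsD[OF wz] by auto
  from \<tau> obtain G where G: "G \<in> link (Y w) {z}" "\<tau> = G \<or> \<tau> = insert w G \<or> \<tau> = insert z G"
    unfolding edge_vertex_link_def by (rule boundary_join_edgeE)
  have G': "insert z G \<in> Y w" "z \<notin> G" "G \<subseteq> vertices \<Gamma>"
    using G(1) base_face_subset[OF w] unfolding link_singleton by auto
  define T where "T = {v\<in>G. \<chi> v \<notin> B}"
  have "finite T" using finite_subset[OF G'(3) finite_vertices[OF complex]] unfolding T_def by simp
  moreover have "{v\<in>insert z G. \<chi> v \<notin> B} = insert z T" using z(2) B unfolding T_def by auto
  ultimately have "card T < card {v\<in>insert z G. \<chi> v \<notin> B}" using G'(2) unfolding T_def by simp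
  moreover have "{v\<in>\<tau>. recoloring v \<notin> insert (c w) B} \<subseteq> T"
    using G(2) G'(3) apexes_fresh w z unfolding T_def recoloring_def by auto
  ultimately have "card {v\<in>\<tau>. recoloring v \<notin> insert (c w) B} < card {v\<in>insert z G. \<chi> v \<notin> B}"
    using card_mono[OF \<open>finite T\<close>] by (meson le_less_trans)
  then show ?thesis using G'(1) by blast
qed

lemma finite_conflicts: "finite conflicts"
  using conflicts_subset finite_apexes finite_vertices[OF complex] by (simp add: finite_subset)

lemma conflict_imp_pos:
  assumes "(w, z) \<in> conflicts" "c w \<notin> B" "\<forall>\<sigma>\<in>Y w. card {v\<in>\<sigma>. \<chi> v \<notin> B} \<le> n"
  shows "1 \<le> n"
proof -
  have "{v\<in>{z}. \<chi> v \<notin> B} = {z}" using conflictsD(3)[OF assms(1)] assms(2) by auto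
  then show ?thesis using assms(3) conflictsD(4)[OF assms(1)] by force
qed

definition origin :: "'a \<Rightarrow> 'a \<times> 'a" where
  "origin = inv_into conflicts f"

lemma origin_f: "p \<in> conflicts \<Longrightarrow> origin (f p) = p"
  unfolding origin_def using inj_on_subset[OF inj_f conflicts_subset] by (rule inv_into_f_f)

lemma new_stars_conflicts:
  "new_stars conflicts
     = (\<Union>x\<in>f ` conflicts. insert x ` edge_vertex_link (fst (origin x)) (snd (origin x)))"
  unfolding new_stars_def using origin_f by auto

lemma new_apex_pending:
  assumes wz: "(w, z) \<in> conflicts" and B: "B \<subseteq> {..D}" "c w \<le> D" "c w \<notin> B"
    and count: "card B + n \<le> D" "\<forall>\<sigma>\<in>Y w. card {v\<in>\<sigma>. \<chi> v \<notin> B} \<le> n"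
  shows "edge_vertex_link w z \<subseteq> \<Gamma> \<union> cones conflicts \<and> downward_closed (edge_vertex_link w z)
    \<and> insert (c w) B \<subseteq> {..D} \<and> card (insert (c w) B) + (n - 1) \<le> D
    \<and> (\<forall>\<tau>\<in>edge_vertex_link w z. card {v\<in>\<tau>. recoloring v \<notin> insert (c w) B} \<le> n - 1)"
proof -
  have w: "w \<in> W" using conflictsD(1)[OF wz] .
  have "1 \<le> n" using conflict_imp_pos[OF wz B(3) count(2)] .
  moreover have "finite B" using B(1) finite_subset by blast
  ultimately have "card (insert (c w) B) + (n - 1) \<le> D" using count(1) B(3) by simp
  moreover have "\<forall>\<tau>\<in>edge_vertex_link w z. card {v\<in>\<tau>. recoloring v \<notin> insert (c w) B} \<le> n - 1"
    using recolored_edge_vertex_link_card[OF wz B(3)] count(2) by fastforce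
  ultimately show ?thesis
    using edge_vertex_link_subset_cones[OF wz order_refl] B(1,2)
      downward_closed_boundary_join[OF downward_closed_link[OF base_closed[OF w]]]
    unfolding edge_vertex_link_def by blast
qed


lemma pending_cones_next:
  assumes pending: "pending_cones D \<Gamma> \<chi> W Y B n" and c: "\<And>w. w \<in> W \<Longrightarrow> c w \<le> D \<and> c w \<notin> B w"
  shows "pending_cones D (\<Gamma> \<union> cones conflicts) recoloring (f ` conflicts)
    (\<lambda>x. edge_vertex_link (fst (origin x)) (snd (origin x)))
    (\<lambda>x. insert (c (fst (origin x))) (B (fst (origin x)))) (n - 1)"
proof -
  have "\<forall>x\<in>f ` conflicts. edge_vertex_link (fst (origin x)) (snd (origin x)) \<subseteq> \<Gamma> \<union> cones conflicts
      \<and> downward_closed (edge_vertex_link (fst (origin x)) (snd (origin x)))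
      \<and> insert (c (fst (origin x))) (B (fst (origin x))) \<subseteq> {..D}
      \<and> card (insert (c (fst (origin x))) (B (fst (origin x)))) + (n - 1) \<le> D
      \<and> (\<forall>\<tau>\<in>edge_vertex_link (fst (origin x)) (snd (origin x)).
           card {v\<in>\<tau>. recoloring v \<notin> insert (c (fst (origin x))) (B (fst (origin x)))} \<le> n - 1)"
  proof
    fix x assume "x \<in> f ` conflicts"
    then obtain w z where wz: "(w, z) \<in> conflicts" "x = f (w, z)" by auto
    have w: "w \<in> W" using conflictsD(1)[OF wz(1)] .
    show "edge_vertex_link (fst (origin x)) (snd (origin x)) \<subseteq> \<Gamma> \<union> cones conflicts
      \<and> downward_closed (edge_vertex_link (fst (origin x)) (snd (origin x)))
      \<and> insert (c (fst (origin x))) (B (fst (origin x))) \<subseteq> {..D}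
      \<and> card (insert (c (fst (origin x))) (B (fst (origin x)))) + (n - 1) \<le> D
      \<and> (\<forall>\<tau>\<in>edge_vertex_link (fst (origin x)) (snd (origin x)).
           card {v\<in>\<tau>. recoloring v \<notin> insert (c (fst (origin x))) (B (fst (origin x)))} \<le> n - 1)"
      using new_apex_pending[OF wz(1), of "B w" D n] pending c[OF w] w origin_f[OF wz(1)] wz(2)
      unfolding pending_cones_def by simp
  qed
  moreover have "f ` conflicts \<inter> vertices (\<Gamma> \<union> cones conflicts) = {}"
    using vertices_colored_part f_fresh image_mono[OF conflicts_subset, of f] by blast
  ultimately show ?thesis
    unfolding pending_cones_def
    using simplicial_complex_colored_part proper_coloring_colored_part finite_conflicts by blast
qed

lemma conflicts_empty:
  assumes "pending_cones D \<Gamma> \<chi> W Y B 0" "\<And>w. w \<in> W \<Longrightarrow> c w \<notin> B w"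
  shows "conflicts = {}"
proof (rule ccontr)
  assume "conflicts \<noteq> {}"
  then obtain w z where wz: "(w, z) \<in> conflicts" by auto
  then have "w \<in> W" by (rule conflictsD(1))
  then show False using conflict_imp_pos[OF wz, of "B w" 0] assms unfolding pending_cones_def by simp
qed
end

lemma pending_cones_round:
  fixes \<Gamma> :: "'a set set"
  assumes inf: "infinite (UNIV :: 'a set)" and A: "finite A" and pending: "pending_cones D \<Gamma> \<chi> W Y B n"
  obtains \<Gamma>' \<chi>' W' Y' B' where
    "(stellar_step_avoiding A)\<^sup>*\<^sup>* (\<Gamma> \<union> (\<Union>w\<in>W. insert w ` Y w)) (\<Gamma>' \<union> (\<Union>w\<in>W'. insert w ` Y' w))"
    "\<Gamma> \<subseteq> \<Gamma>'" "pending_cones D \<Gamma>' \<chi>' W' Y' B' (n - 1)" "n = 0 \<Longrightarrow> W' = {}"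
    "\<forall>v\<in>vertices \<Gamma>. \<chi>' v = \<chi> v" "\<forall>v\<in>vertices \<Gamma>' - vertices \<Gamma>. \<chi>' v \<le> D"
proof -
  have \<Gamma>: "simplicial_complex \<Gamma>" "proper_coloring_on \<Gamma> \<chi>" "finite W" "W \<inter> vertices \<Gamma> = {}"
    and base: "\<And>w. w \<in> W \<Longrightarrow> Y w \<subseteq> \<Gamma> \<and> downward_closed (Y w) \<and> B w \<subseteq> {..D} \<and> card (B w) + n \<le> D
          \<and> (\<forall>\<sigma>\<in>Y w. card {v\<in>\<sigma>. \<chi> v \<notin> B w} \<le> n)"
    using pending unfolding pending_cones_def by auto
  have "\<exists>x. x \<le> D \<and> x \<notin> B w" if w: "w \<in> W" for w
  proof -
    have "card (B w) < card {..D}" using base[OF w] by auto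
    then have "B w \<noteq> {..D}" by auto
    then show ?thesis using base[OF w] by auto
  qed
  then obtain c where c: "\<And>w. w \<in> W \<Longrightarrow> c w \<le> D \<and> c w \<notin> B w" by metis
  have "finite (W \<times> vertices \<Gamma>)" "finite (A \<union> vertices \<Gamma> \<union> W)"
    using \<Gamma>(1,3) A finite_vertices by auto
  then obtain f :: "'a \<times> 'a \<Rightarrow> 'a" where f: "inj_on f (W \<times> vertices \<Gamma>)"
    "f ` (W \<times> vertices \<Gamma>) \<inter> (A \<union> vertices \<Gamma> \<union> W) = {}"
    by (rule fresh_injection[OF inf])
  interpret R: cone_recoloring \<Gamma> \<chi> W Y c f
    using \<Gamma> base f by unfold_locales blast+
  have "f ` R.conflicts \<inter> A = {}" using f(2) image_mono[OF R.conflicts_subset, of f] by blast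
  then have "(stellar_step_avoiding A)\<^sup>*\<^sup>* (R.partial_subdivision {}) (R.partial_subdivision R.conflicts)"
    by (rule R.partial_subdivision_steps[OF R.finite_conflicts order_refl])
  then have steps: "(stellar_step_avoiding A)\<^sup>*\<^sup>* (\<Gamma> \<union> (\<Union>w\<in>W. insert w ` Y w)) ((\<Gamma> \<union> R.cones R.conflicts)
      \<union> (\<Union>x\<in>f ` R.conflicts. insert x ` R.edge_vertex_link (fst (R.origin x)) (snd (R.origin x))))"
    unfolding R.partial_subdivision_empty unfolding R.partial_subdivision_def R.new_stars_conflicts .
  have "\<forall>v\<in>vertices \<Gamma>. R.recoloring v = \<chi> v"
    using \<Gamma>(4) unfolding R.recoloring_def by auto
  moreover have "\<forall>v\<in>vertices (\<Gamma> \<union> R.cones R.conflicts) - vertices \<Gamma>. R.recoloring v \<le> D"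
    using R.vertices_colored_part c unfolding R.recoloring_def by fastforce
  moreover have "n = 0 \<Longrightarrow> f ` R.conflicts = {}" using R.conflicts_empty pending c by simp
  ultimately show thesis
    using that[OF steps _ R.pending_cones_next[OF pending]] c by blast
qed

lemma coloring_extension_trans:
  assumes "\<Gamma> \<subseteq> \<Gamma>'" "\<forall>v\<in>vertices \<Gamma>. \<chi>' v = \<chi> v" "\<forall>v\<in>vertices \<Gamma>' - vertices \<Gamma>. \<chi>' v \<le> D"
    "\<forall>v\<in>vertices \<Gamma>'. \<chi>'' v = \<chi>' v" "\<forall>v\<in>vertices \<Delta> - vertices \<Gamma>'. \<chi>'' v \<le> D"
  shows "(\<forall>v\<in>vertices \<Gamma>. \<chi>'' v = \<chi> v) \<and> (\<forall>v\<in>vertices \<Delta> - vertices \<Gamma>. \<chi>'' v \<le> D)"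
  using vertices_mono[OF assms(1)] assms(2-5) by (metis DiffD1 DiffD2 DiffI subsetD)

lemma resolve_pending_cones:
  fixes \<Gamma> :: "'a set set"
  assumes inf: "infinite (UNIV :: 'a set)" and A: "finite A"
  shows "pending_cones D \<Gamma> \<chi> W Y B n \<Longrightarrow> \<exists>\<Delta> \<chi>'.
     (stellar_step_avoiding A)\<^sup>*\<^sup>* (\<Gamma> \<union> (\<Union>w\<in>W. insert w ` Y w)) \<Delta> \<and> \<Gamma> \<subseteq> \<Delta>
     \<and> simplicial_complex \<Delta> \<and> proper_coloring_on \<Delta> \<chi>'
     \<and> (\<forall>v\<in>vertices \<Gamma>. \<chi>' v = \<chi> v) \<and> (\<forall>v\<in>vertices \<Delta> - vertices \<Gamma>. \<chi>' v \<le> D)"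
proof (induction n arbitrary: \<Gamma> \<chi> W Y B)
  case 0
  obtain \<Gamma>' \<chi>' W' Y' B' where r:
    "(stellar_step_avoiding A)\<^sup>*\<^sup>* (\<Gamma> \<union> (\<Union>w\<in>W. insert w ` Y w)) (\<Gamma>' \<union> (\<Union>w\<in>W'. insert w ` Y' w))"
    "\<Gamma> \<subseteq> \<Gamma>'" "pending_cones D \<Gamma>' \<chi>' W' Y' B' (0 - 1)" "W' = {}"
    "\<forall>v\<in>vertices \<Gamma>. \<chi>' v = \<chi> v" "\<forall>v\<in>vertices \<Gamma>' - vertices \<Gamma>. \<chi>' v \<le> D"
    by (rule pending_cones_round[OF inf A 0]) blast
  then show ?case unfolding pending_cones_def by auto
next
  case (Suc n)
  obtain \<Gamma>' \<chi>' W' Y' B' where r: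
    "(stellar_step_avoiding A)\<^sup>*\<^sup>* (\<Gamma> \<union> (\<Union>w\<in>W. insert w ` Y w)) (\<Gamma>' \<union> (\<Union>w\<in>W'. insert w ` Y' w))"
    "\<Gamma> \<subseteq> \<Gamma>'" "pending_cones D \<Gamma>' \<chi>' W' Y' B' n"
    "\<forall>v\<in>vertices \<Gamma>. \<chi>' v = \<chi> v" "\<forall>v\<in>vertices \<Gamma>' - vertices \<Gamma>. \<chi>' v \<le> D"
    by (rule pending_cones_round[OF inf A Suc.prems]) auto
  obtain \<Delta> \<chi>'' where d: "(stellar_step_avoiding A)\<^sup>*\<^sup>* (\<Gamma>' \<union> (\<Union>w\<in>W'. insert w ` Y' w)) \<Delta>"
    "\<Gamma>' \<subseteq> \<Delta>" "simplicial_complex \<Delta>" "proper_coloring_on \<Delta> \<chi>''"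
    "\<forall>v\<in>vertices \<Gamma>'. \<chi>'' v = \<chi>' v" "\<forall>v\<in>vertices \<Delta> - vertices \<Gamma>'. \<chi>'' v \<le> D"
    using Suc.IH[OF r(3)] by blast
  show ?case using rtranclp_trans[OF r(1) d(1)] r(2) d(2-4) coloring_extension_trans[OF r(2,4,5) d(5,6)]
    by blast
qed

lemma simplicial_complex_remove_facet:
  assumes L: "simplicial_complex L" and facet: "\<forall>G\<in>L. F \<subseteq> G \<longrightarrow> G = F"
  shows "simplicial_complex (L - {F})"
proof -
  have "downward_closed (L - {F})"
    using L facet unfolding simplicial_complex_altdef downward_closed_def by blast
  then show ?thesis using L unfolding simplicial_complex_altdef by blast
qed

lemma obtain_relative_facet:
  assumes "finite L" "K \<subseteq> L" "downward_closed K" "L - K \<noteq> {}"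
  obtains F where "F \<in> L - K" "\<forall>G\<in>L. F \<subseteq> G \<longrightarrow> G = F"
proof -
  obtain F where F: "F \<in> L - K" "\<forall>G\<in>L - K. F \<subseteq> G \<longrightarrow> F = G"
    using finite_has_maximal[of "L - K"] assms(1,4) by blast
  have "G \<notin> K" if "F \<subseteq> G" for G using F(1) downward_closedD[OF assms(3) _ that] by blast
  then show thesis using that F by blast
qed

lemma extend_coloring_over_facet:
  fixes L :: "'a set set"
  assumes inf: "infinite (UNIV :: 'a set)" and A: "finite A" and L: "simplicial_complex L"
    and F: "F \<in> L" "F \<noteq> {}" "card F \<le> Suc n" and facet: "\<forall>G\<in>L. F \<subseteq> G \<longrightarrow> G = F"
    and a: "a \<notin> A" "a \<notin> vertices L"
    and L0: "(stellar_step_avoiding (insert a A))\<^sup>*\<^sup>* (L - {F}) L0" "simplicial_complex L0"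
      "proper_coloring_on L0 \<kappa>0"
  shows "\<exists>L' \<kappa>'. (stellar_step_avoiding A)\<^sup>*\<^sup>* L L' \<and> L0 \<subseteq> L'
    \<and> simplicial_complex L' \<and> proper_coloring_on L' \<kappa>'
    \<and> (\<forall>v\<in>vertices L0. \<kappa>' v = \<kappa>0 v) \<and> (\<forall>v\<in>vertices L' - vertices L0. \<kappa>' v \<le> n)"
proof -
  define X where "X = {H. H \<subset> F}"
  have "stellar_subdivision L F a = (L - {F}) \<union> insert a ` X"
    unfolding X_def by (rule stellar_subdivision_facet[OF L F(1) facet])
  then have step: "stellar_step_avoiding A L ((L - {F}) \<union> insert a ` X)"
    unfolding stellar_step_avoiding_def using F(1,2) a by (intro exI[of _ F] exI[of _ a]) simp
  have "finite F" using L F(1) unfolding simplicial_complex_def by blast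
  have X_card: "\<forall>\<sigma>\<in>X. finite \<sigma> \<and> card \<sigma> \<le> n"
  proof
    fix \<sigma> assume "\<sigma> \<in> X"
    then have "\<sigma> \<subset> F" unfolding X_def by simp
    then have "finite \<sigma>" "card \<sigma> < card F"
      using finite_subset[OF _ \<open>finite F\<close>] psubset_card_mono[OF \<open>finite F\<close>] by auto
    then show "finite \<sigma> \<and> card \<sigma> \<le> n" using F(3) by simp
  qed
  have X_sub: "X \<subseteq> L - {F}"
    using L F(1) unfolding X_def simplicial_complex_def by blast
  have X_closed: "downward_closed X" unfolding X_def downward_closed_def by blast
  have "a \<notin> vertices (L - {F})" using a(2) vertices_mono[of "L - {F}" L] by blast
  from cone_lift_stellar_steps[OF L0(1) this X_sub X_closed X_card simplicial_complex_remove_facet[OF L facet]]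
  obtain X' where X': "(stellar_step_avoiding A)\<^sup>*\<^sup>* ((L - {F}) \<union> insert a ` X) (L0 \<union> insert a ` X')"
    "X' \<subseteq> L0" "downward_closed X'" "\<forall>\<sigma>\<in>X'. finite \<sigma> \<and> card \<sigma> \<le> n" "a \<notin> vertices L0"
    by blast
  have "pending_cones n L0 \<kappa>0 {a} (\<lambda>_. X') (\<lambda>_. {}) n"
    unfolding pending_cones_def using L0(2,3) X'(2-5) by simp
  from resolve_pending_cones[OF inf A this]
  obtain L' \<kappa>' where L': "(stellar_step_avoiding A)\<^sup>*\<^sup>* (L0 \<union> insert a ` X') L'" "L0 \<subseteq> L'"
    "simplicial_complex L'" "proper_coloring_on L' \<kappa>'"
    "\<forall>v\<in>vertices L0. \<kappa>' v = \<kappa>0 v" "\<forall>v\<in>vertices L' - vertices L0. \<kappa>' v \<le> n"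
    by auto
  have "(stellar_step_avoiding A)\<^sup>*\<^sup>* L L'"
    using converse_rtranclp_into_rtranclp[OF step rtranclp_trans[OF X'(1) L'(1)]] .
  then show ?thesis using L'(2-6) by (intro exI[of _ L'] exI[of _ \<kappa>'] conjI)
qed

lemma extend_coloring_by_stellar_subdivisions:
  fixes L K :: "'a set set" and \<kappa> :: "'a \<Rightarrow> nat"
  assumes inf: "infinite (UNIV :: 'a set)"
  shows "finite A \<Longrightarrow> simplicial_complex L \<Longrightarrow> simplicial_complex K \<Longrightarrow> K \<subseteq> L
    \<Longrightarrow> \<forall>\<sigma>\<in>L - K. card \<sigma> \<le> Suc n \<Longrightarrow> proper_coloring_on K \<kappa>
    \<Longrightarrow> \<exists>L' \<kappa>'. (stellar_step_avoiding A)\<^sup>*\<^sup>* L L' \<and> K \<subseteq> L' \<and> simplicial_complex L'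
        \<and> proper_coloring_on L' \<kappa>' \<and> (\<forall>v\<in>vertices K. \<kappa>' v = \<kappa> v)
        \<and> (\<forall>v\<in>vertices L' - vertices K. \<kappa>' v \<le> n)"
proof (induction "card (L - K)" arbitrary: L A rule: less_induct)
  case less
  note A = less.prems(1) and L = less.prems(2) and K = less.prems(3) and KL = less.prems(4)
    and bound = less.prems(5) and \<kappa> = less.prems(6)
  show ?case
  proof (cases "L = K")
    case True
    then show ?thesis using L \<kappa> by (intro exI[of _ L] exI[of _ \<kappa>]) auto
  next
    case False
    have "finite L" using L unfolding simplicial_complex_def by blast
    then obtain F where F: "F \<in> L - K" and facet: "\<forall>G\<in>L. F \<subseteq> G \<longrightarrow> G = F"
      using obtain_relative_facet[of L K] KL K False unfolding simplicial_complex_altdef by blast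
    show ?thesis
    proof (cases "F = {}")
      case True
      then have "L \<subseteq> {{}}" using facet by blast
      then have "proper_coloring_on L \<kappa>" "vertices L = {}"
        unfolding proper_coloring_on_def vertices_def by auto
      then show ?thesis using L KL by (intro exI[of _ L] exI[of _ \<kappa>]) auto
    next
      case False
      obtain a where a: "a \<notin> A" "a \<notin> vertices L"
        using ex_new_if_finite[OF inf, of "A \<union> vertices L"] A finite_vertices[OF L] by blast
      have "L - {F} - K = L - K - {F}" by blast
      then have "card (L - {F} - K) < card (L - K)"
        using card_Diff1_less[OF finite_Diff[OF \<open>finite L\<close>] F] by simp
      moreover have "K \<subseteq> L - {F}" using KL F by blast
      ultimately obtain L0 \<kappa>0 where L0: "(stellar_step_avoiding (insert a A))\<^sup>*\<^sup>* (L - {F}) L0"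
        "K \<subseteq> L0" "simplicial_complex L0" "proper_coloring_on L0 \<kappa>0"
        "\<forall>v\<in>vertices K. \<kappa>0 v = \<kappa> v" "\<forall>v\<in>vertices L0 - vertices K. \<kappa>0 v \<le> n"
        using less.hyps[of "L - {F}" "insert a A"] A simplicial_complex_remove_facet[OF L facet] K bound \<kappa>
        by auto
      have "F \<in> L" "card F \<le> Suc n" using F bound by auto
      from extend_coloring_over_facet[OF inf A L this(1) False this(2) facet a L0(1,3,4)]
      obtain L' \<kappa>' where L': "(stellar_step_avoiding A)\<^sup>*\<^sup>* L L'" "L0 \<subseteq> L'"
        "simplicial_complex L'" "proper_coloring_on L' \<kappa>'"
        "\<forall>v\<in>vertices L0. \<kappa>' v = \<kappa>0 v" "\<forall>v\<in>vertices L' - vertices L0. \<kappa>' v \<le> n"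
        by blast
      show ?thesis using L'(1-4) L0(2) coloring_extension_trans[OF L0(2,5,6) L'(5,6)] by blast
    qed
  qed
qed

lemma relative_face_card_le:
  assumes "finite L" "\<sigma> \<in> L - K"
  shows "int (card \<sigma>) \<le> Max (face_dim ` (L - K)) + 1"
proof -
  have "face_dim \<sigma> \<le> Max (face_dim ` (L - K))" using assms by (intro Max_ge) auto
  then show ?thesis unfolding face_dim_def by simp
qed

lemma nonempty_faces_in_subcomplex:
  assumes "K \<subseteq> L" "\<forall>\<sigma>\<in>L - K. \<sigma> = {}" "proper_coloring_on K \<kappa>"
  shows "proper_coloring_on L \<kappa>" "vertices L \<subseteq> vertices K"
proof -
  have "\<sigma> \<in> K" if "\<sigma> \<in> L" "\<sigma> \<noteq> {}" for \<sigma> using assms(2) that by blast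
  then show "proper_coloring_on L \<kappa>" "vertices L \<subseteq> vertices K"
    using assms(3) unfolding proper_coloring_on_def vertices_def by blast+
qed

lemma extend_coloring_bounded_faces:
  fixes L K :: "'a set set" and \<kappa> :: "'a \<Rightarrow> nat" and d :: int
  assumes inf: "infinite (UNIV :: 'a set)" and L: "simplicial_complex L" and K: "simplicial_complex K"
    and KL: "K \<subseteq> L" and card_le: "\<forall>\<sigma>\<in>L - K. int (card \<sigma>) \<le> d + 1" and \<kappa>: "proper_coloring_on K \<kappa>"
  obtains L' \<kappa>' where "stellar_step\<^sup>*\<^sup>* L L'" "K \<subseteq> L'" "proper_coloring_on L' \<kappa>'"
    "\<forall>v\<in>vertices K. \<kappa>' v = \<kappa> v" "\<forall>v\<in>vertices L' - vertices K. int (\<kappa>' v) \<le> d"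
proof (cases "d < 0")
  case True
  have "\<forall>\<sigma>\<in>L - K. \<sigma> = {}"
  proof
    fix \<sigma> assume \<sigma>: "\<sigma> \<in> L - K"
    have "finite \<sigma>" using L \<sigma> unfolding simplicial_complex_def by blast
    moreover have "int (card \<sigma>) \<le> d + 1" using card_le \<sigma> by blast
    then have "card \<sigma> = 0" using True by linarith
    ultimately show "\<sigma> = {}" by simp
  qed
  then show thesis using that[of L \<kappa>] nonempty_faces_in_subcomplex[OF KL _ \<kappa>] KL by blast
next
  case False
  have "\<forall>\<sigma>\<in>L - K. card \<sigma> \<le> Suc (nat d)"
  proof
    fix \<sigma> assume "\<sigma> \<in> L - K"
    then have "int (card \<sigma>) \<le> d + 1" using card_le by blast
    then show "card \<sigma> \<le> Suc (nat d)" using False by linarith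
  qed
  from extend_coloring_by_stellar_subdivisions[OF inf finite.emptyI L K KL this \<kappa>]
  obtain L' \<kappa>' where L': "(stellar_step_avoiding {})\<^sup>*\<^sup>* L L'" "K \<subseteq> L'"
    "proper_coloring_on L' \<kappa>'" "\<forall>v\<in>vertices K. \<kappa>' v = \<kappa> v"
    "\<forall>v\<in>vertices L' - vertices K. \<kappa>' v \<le> nat d"
    by blast
  have "\<forall>v\<in>vertices L' - vertices K. int (\<kappa>' v) \<le> d"
  proof
    fix v assume "v \<in> vertices L' - vertices K"
    then have "\<kappa>' v \<le> nat d" using L'(5) by blast
    then show "int (\<kappa>' v) \<le> d" using False by linarith
  qed
  then show thesis by (rule that[OF rtranclp_stellar_step_avoiding_imp[OF L'(1)] L'(2-4)])
qed

theorem theorem3p1: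
  fixes L K :: "'a set set" and \<kappa> :: "'a \<Rightarrow> nat" and m :: nat and d :: int
  assumes "infinite (UNIV :: 'a set)"
    and "simplicial_complex L" and "simplicial_complex K" and "K \<subseteq> L"
    and "L - K \<noteq> {}"
    and "d = Max (face_dim ` (L - K))"
    and "proper_m_coloring K m \<kappa>"
  shows "\<exists>L' \<kappa>'. stellar_step\<^sup>*\<^sup>* L L' \<and> K \<subseteq> L'
          \<and> proper_coloring_on L' \<kappa>'
          \<and> (\<forall>v\<in>vertices K. \<kappa>' v = \<kappa> v)
          \<and> (\<forall>v\<in>vertices L'. int (\<kappa>' v) \<le> max (int m - 1) d)
          \<and> (\<forall>v\<in>vertices L' - vertices K. int (\<kappa>' v) \<le> d)"
proof -
  \<comment> \<open>The hypothesis \<open>L - K \<noteq> {}\<close> only makes \<open>d\<close> meaningful; the construction does not need it.\<close>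
  have \<kappa>: "proper_coloring_on K \<kappa>" "\<forall>v\<in>vertices K. \<kappa> v < m"
    using assms(7) unfolding proper_m_coloring_def by auto
  have "\<forall>\<sigma>\<in>L - K. int (card \<sigma>) \<le> d + 1"
    using relative_face_card_le assms(2,6) unfolding simplicial_complex_def by blast
  then obtain L' \<kappa>' where L': "stellar_step\<^sup>*\<^sup>* L L'" "K \<subseteq> L'" "proper_coloring_on L' \<kappa>'"
    "\<forall>v\<in>vertices K. \<kappa>' v = \<kappa> v" "\<forall>v\<in>vertices L' - vertices K. int (\<kappa>' v) \<le> d"
    using extend_coloring_bounded_faces[OF assms(1-4) _ \<kappa>(1)] by blast
  moreover have "\<forall>v\<in>vertices L'. int (\<kappa>' v) \<le> max (int m - 1) d" using L'(4,5) \<kappa>(2) by force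
  ultimately show ?thesis by blast
qed

end
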